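(* Let $0<\theta<2\pi$ and define, for $x\ge\psi(\theta)=\frac{\theta-\sin\theta}{1-\cos\theta}$, $$v(\theta,x)=\frac{U(\theta,x)^2}{(\theta-\sin\theta)^2},\quad U(\theta,x)=\theta\cos\tfrac\theta2-2\sin\tfrac\theta2+\sqrt{N(\theta,x)},$$ $$N(\theta,x)=\sin^2\tfrac\theta2\big[2(\theta-\sin\theta)x+2(1-\cos\theta)-\theta^2\big].$$ Then the function $x\mapsto v(\theta,x)$ is strictly increasing and convex on $[\psi(\theta),\infty)$.
   Context: Nonnegative square roots are used. (In the paper, the graph of $x\mapsto v(\theta,x)$ on $[\psi(\theta),\infty)$ is the level set $\{(x,v):v\ge0,\ \delta(x,v)=\theta\}$ of the parameter $\delta$ of the Heston distance.) *)

theory Defs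
  imports "HOL-Analysis.Analysis"
begin

definition psi :: "real \<Rightarrow> real" where
  "psi \<theta> = (\<theta> - sin \<theta>) / (1 - cos \<theta>)"

definition NN :: "real \<Rightarrow> real \<Rightarrow> real" where
  "NN \<theta> x = (sin (\<theta>/2))^2 * (2 * (\<theta> - sin \<theta>) * x + 2 * (1 - cos \<theta>) - \<theta>^2)"

definition UU :: "real \<Rightarrow> real \<Rightarrow> real" where
  "UU \<theta> x = \<theta> * cos (\<theta>/2) - 2 * sin (\<theta>/2) + sqrt (NN \<theta> x)"

definition vv :: "real \<Rightarrow> real \<Rightarrow> real" where
  "vv \<theta> x = (UU \<theta> x)^2 / (\<theta> - sin \<theta>)^2"

end

theory Submission
  imports Defs
begin

text \<open>
  Since \<open>1 - cos \<theta> = 2 sin\<^sup>2(\<theta>/2)\<close>, the radicand \<open>N(\<theta>,x)\<close> is an affine function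
  \<open>A x + B\<close> of \<open>x\<close> with slope \<open>A = 2 sin\<^sup>2(\<theta>/2) (\<theta> - sin \<theta>) > 0\<close>, and at \<open>x = \<psi>(\<theta>)\<close>
  it equals \<open>a\<^sup>2\<close> with \<open>a = \<theta> cos(\<theta>/2) - 2 sin(\<theta>/2) \<le> 0\<close>. So \<open>v\<close> is a positive multiple
  of \<open>(a + \<surd>(A x + B))\<^sup>2 = a\<^sup>2 + (A x + B) + 2a \<surd>(A x + B)\<close>. The base \<open>a + \<surd>(A x + B)\<close> is
  nonnegative and strictly increasing, which gives monotonicity; the right-hand side is an
  affine function minus a nonnegative multiple of the concave function \<open>\<surd>(A x + B)\<close>, which
  gives convexity.
\<close>

lemma convex_on_cong:
  assumes "convex_on S f" and "\<And>x. x \<in> S \<Longrightarrow> f x = g x"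
  shows "convex_on S g"
  using assms by (auto simp: convex_on_def convex_def)

lemma sqrt_convex_combination_le:
  fixes P Q t :: real
  assumes "0 \<le> P" "0 \<le> Q" "0 \<le> t" "t \<le> 1"
  shows "(1 - t) * sqrt P + t * sqrt Q \<le> sqrt ((1 - t) * P + t * Q)"
proof (rule real_le_rsqrt)
  have "(1 - t) * P + t * Q - ((1 - t) * sqrt P + t * sqrt Q)\<^sup>2 = (1 - t) * t * (sqrt P - sqrt Q)\<^sup>2"
    using assms by (simp add: power2_eq_square algebra_simps)
  also have "\<dots> \<ge> 0"
    using assms by simp
  finally show "((1 - t) * sqrt P + t * sqrt Q)\<^sup>2 \<le> (1 - t) * P + t * Q"
    by simp
qed

lemma affine_lower_bound_mono:
  fixes A B c p z :: real
  assumes "0 \<le> A" and "c \<le> A * p + B" and "p \<le> z"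
  shows "c \<le> A * z + B"
proof -
  have "A * p \<le> A * z"
    using assms by (simp add: mult_left_mono)
  then show ?thesis
    using assms by linarith
qed

lemma concave_on_sqrt_affine:
  fixes A B p :: real
  assumes "0 \<le> A" and "0 \<le> A * p + B"
  shows "concave_on {p..} (\<lambda>z. sqrt (A * z + B))"
proof (rule concave_on_linorderI)
  fix t x y :: real
  assume "0 < t" "t < 1" "x \<in> {p..}" "y \<in> {p..}"
  moreover have "A * ((1 - t) *\<^sub>R x + t *\<^sub>R y) + B = (1 - t) * (A * x + B) + t * (A * y + B)"
    by (simp add: algebra_simps)
  ultimately show "(1 - t) * sqrt (A * x + B) + t * sqrt (A * y + B)
      \<le> sqrt (A * ((1 - t) *\<^sub>R x + t *\<^sub>R y) + B)"
    using assms affine_lower_bound_mono sqrt_convex_combination_le by simp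
qed simp

lemma convex_on_square_shifted_sqrt_affine:
  fixes a A B p :: real
  assumes "a \<le> 0" and "0 \<le> A" and "0 \<le> A * p + B"
  shows "convex_on {p..} (\<lambda>z. (a + sqrt (A * z + B))\<^sup>2)"
proof (rule convex_on_cong)
  have "convex_on {p..} (\<lambda>z. a\<^sup>2 + B + A * z)"
    using \<open>0 \<le> A\<close> by (intro convex_on_add convex_on_cmul) (simp_all add: convex_on_const convex_on_ident)
  moreover have "concave_on {p..} (\<lambda>z. (- 2 * a) * sqrt (A * z + B))"
    using assms by (intro concave_on_cmul concave_on_sqrt_affine) simp_all
  ultimately show "convex_on {p..} (\<lambda>z. a\<^sup>2 + B + A * z - (- 2 * a) * sqrt (A * z + B))"
    by (rule convex_on_diff)
next
  fix z assume "z \<in> {p..}"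
  then have "0 \<le> A * z + B"
    using assms affine_lower_bound_mono by simp
  then show "a\<^sup>2 + B + A * z - (- 2 * a) * sqrt (A * z + B) = (a + sqrt (A * z + B))\<^sup>2"
    by (simp add: power2_eq_square algebra_simps)
qed

lemma strict_mono_on_square_shifted_sqrt_affine:
  fixes a A B p :: real
  assumes "0 < A" and "a\<^sup>2 \<le> A * p + B"
  shows "strict_mono_on {p..} (\<lambda>z. (a + sqrt (A * z + B))\<^sup>2)"
proof (rule strict_mono_onI)
  fix x y assume xy: "x \<in> {p..}" "y \<in> {p..}" "x < y"
  have "a\<^sup>2 \<le> A * x + B"
    using assms xy affine_lower_bound_mono[of A "a\<^sup>2" p B x] by simp
  then have "\<bar>a\<bar> \<le> sqrt (A * x + B)"
    using real_sqrt_le_mono by fastforce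
  moreover have "sqrt (A * x + B) < sqrt (A * y + B)"
    using assms xy by simp
  ultimately show "(a + sqrt (A * x + B))\<^sup>2 < (a + sqrt (A * y + B))\<^sup>2"
    by (intro power_strict_mono) auto
qed

lemma sin_less_self:
  fixes x :: real
  assumes "0 < x"
  shows "sin x < x"
proof (cases "x < pi")
  case True
  have "(\<lambda>u. u - sin u) 0 < (\<lambda>u. u - sin u) x"
  proof (rule DERIV_pos_imp_increasing_open[OF assms])
    fix y :: real assume "0 < y" "y < x"
    then have "0 < 1 - cos y"
      using True cos_monotone_0_pi[of 0 y] by simp
    moreover have "((\<lambda>u. u - sin u) has_real_derivative 1 - cos y) (at y)"
      by (auto intro!: derivative_eq_intros)
    ultimately show "\<exists>D. ((\<lambda>u. u - sin u) has_real_derivative D) (at y) \<and> 0 < D"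
      by blast
  qed (intro continuous_intros)
  then show ?thesis by simp
next
  case False
  then show ?thesis
    using sin_le_one[of x] pi_gt3 by linarith
qed

lemma mult_cos_less_sin:
  fixes t :: real
  assumes "0 < t" and "t < pi"
  shows "t * cos t < sin t"
proof -
  have "(\<lambda>u. sin u - u * cos u) 0 < (\<lambda>u. sin u - u * cos u) t"
  proof (rule DERIV_pos_imp_increasing_open[OF \<open>0 < t\<close>])
    fix y :: real assume "0 < y" "y < t"
    then have "0 < y * sin y"
      using assms sin_gt_zero[of y] by simp
    moreover have "((\<lambda>u. sin u - u * cos u) has_real_derivative y * sin y) (at y)"
      by (auto intro!: derivative_eq_intros)
    ultimately show "\<exists>D. ((\<lambda>u. sin u - u * cos u) has_real_derivative D) (at y) \<and> 0 < D"
      by blast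
  qed (intro continuous_intros)
  then show ?thesis by simp
qed

lemma NN_affine: "NN \<theta> x = 2 * (sin (\<theta>/2))\<^sup>2 * (\<theta> - sin \<theta>) * x + NN \<theta> 0"
  by (simp add: NN_def algebra_simps)

lemma NN_psi:
  assumes "sin (\<theta>/2) \<noteq> 0"
  shows "NN \<theta> (psi \<theta>) = (\<theta> * cos (\<theta>/2) - 2 * sin (\<theta>/2))\<^sup>2"
proof -
  define s c where "s = sin (\<theta>/2)" and "c = cos (\<theta>/2)"
  have sin: "sin \<theta> = 2 * s * c" and cos: "1 - cos \<theta> = 2 * s\<^sup>2"
    using sin_double[of "\<theta>/2"] cos_double_sin[of "\<theta>/2"] by (simp_all add: s_def c_def)
  have "NN \<theta> (psi \<theta>) = (\<theta> - 2 * s * c)\<^sup>2 + s\<^sup>2 * (4 * s\<^sup>2 - \<theta>\<^sup>2)"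
    using assms unfolding NN_def psi_def sin cos s_def[symmetric]
    by (simp add: field_simps power2_eq_square)
  also have "\<dots> = (\<theta> * c - 2 * s)\<^sup>2 + (\<theta>\<^sup>2 - 4 * s\<^sup>2) * (1 - s\<^sup>2 - c\<^sup>2)"
    by (simp add: power2_eq_square algebra_simps)
  also have "1 - s\<^sup>2 - c\<^sup>2 = 0"
    by (simp add: s_def c_def cos_squared_eq)
  finally show ?thesis
    by (simp add: s_def c_def)
qed

theorem lemma2p7:
  fixes \<theta> :: real
  assumes "0 < \<theta>" and "\<theta> < 2 * pi"
  shows "strict_mono_on {psi \<theta>..} (vv \<theta>) \<and> convex_on {psi \<theta>..} (vv \<theta>)"
proof -
  define a A d where "a = \<theta> * cos (\<theta>/2) - 2 * sin (\<theta>/2)"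
    and "A = 2 * (sin (\<theta>/2))\<^sup>2 * (\<theta> - sin \<theta>)" and "d = (\<theta> - sin \<theta>)\<^sup>2"
  have "0 < sin (\<theta>/2)"
    using assms by (intro sin_gt_zero) simp_all
  moreover have "0 < \<theta> - sin \<theta>"
    using sin_less_self[OF \<open>0 < \<theta>\<close>] by simp
  ultimately have "0 < A" "0 < d"
    by (simp_all add: A_def d_def)
  have "a \<le> 0"
    using mult_cos_less_sin[of "\<theta>/2"] assms by (simp add: a_def)
  have at_psi: "A * psi \<theta> + NN \<theta> 0 = a\<^sup>2"
    using NN_psi[of \<theta>] NN_affine[of \<theta> "psi \<theta>"] \<open>0 < sin (\<theta>/2)\<close> by (simp add: A_def a_def)
  have vv: "vv \<theta> = (\<lambda>z. (a + sqrt (A * z + NN \<theta> 0))\<^sup>2 / d)"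
  proof
    fix z
    show "vv \<theta> z = (a + sqrt (A * z + NN \<theta> 0))\<^sup>2 / d"
      unfolding vv_def UU_def NN_affine[of \<theta> z] by (simp add: a_def A_def d_def)
  qed
  have "strict_mono_on {psi \<theta>..} (\<lambda>z. (a + sqrt (A * z + NN \<theta> 0))\<^sup>2)"
    using strict_mono_on_square_shifted_sqrt_affine[OF \<open>0 < A\<close>] at_psi by simp
  moreover have "convex_on {psi \<theta>..} (\<lambda>z. (a + sqrt (A * z + NN \<theta> 0))\<^sup>2)"
    using convex_on_square_shifted_sqrt_affine[OF \<open>a \<le> 0\<close>] at_psi \<open>0 < A\<close> by simp
  ultimately show ?thesis
    unfolding vv using \<open>0 < d\<close>
    by (auto simp: strict_mono_on_def divide_strict_right_mono intro: convex_on_cdiv)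
qed

end
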